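(* Assume $c\ge2\sqrt\delta$. For real $\lambda\ge0$, all of $\mu^u_-(\lambda),\mu^s_+(\lambda),\mu^u_+(\lambda)$ are real and the Riccati equation $\eta'=\frac{\lambda-1+2\hat u(z)}{\delta}-\frac c\delta\eta-\eta^2$ defines a flow on $\mathbb RP^1\cong S^1$. Let $\ell(z;\lambda)$ be the solution on $\mathbb RP^1$ with $\ell(z;\lambda)\to\mu^u_-(\lambda)$ as $z\to-\infty$. Let $0\le\lambda_1<\lambda_2$ be real numbers that are not eigenvalues, and for $j=1,2$ suppose $\ell(\cdot;\lambda_j)$ takes the value $\mu^s_+(\lambda_j)$ exactly $N_j<\infty$ times as $z$ ranges over $\mathbb R$. Then the number of eigenvalues in the interval $(\lambda_1,\lambda_2)$ equals $|N_1-N_2|$.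
   Context: $\delta>0$, $c>0$, and $\hat u$ solves $\delta\hat u''+c\hat u'+\hat u(1-\hat u)=0$ with $\hat u(-\infty)=1$, $\hat u(+\infty)=0$ (for $c\ge2\sqrt\delta$ this wave satisfies $0<\hat u<1$). $\mu^{u}_-(\lambda)=\frac{-c+\sqrt{c^2+4\delta(\lambda+1)}}{2\delta}$, $\mu^{u,s}_+(\lambda)=\frac{-c\pm\sqrt{c^2+4\delta(\lambda-1)}}{2\delta}$. The Riccati equation is the equation for $\eta=q/p$ when $(p,q)$ solves $p'=q$, $q'=\frac{\lambda-1+2\hat u}{\delta}p-\frac c\delta q$; on $\mathbb RP^1$ it is extended through $\eta=\infty$ via the chart $\tau=1/\eta$. A real $\lambda\ge0$ is an eigenvalue if $\lim_{z\to+\infty}\ell(z;\lambda)=\mu^s_+(\lambda)$; when $\lambda$ is not an eigenvalue, $\lim_{z\to+\infty}\ell(z;\lambda)=\mu^u_+(\lambda)$. *)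

theory Defs
  imports "HOL-Analysis.Analysis"
begin

definition mu_u_minus :: "real \<Rightarrow> real \<Rightarrow> real \<Rightarrow> real" where
  "mu_u_minus \<delta> c lam = (- c + sqrt (c^2 + 4 * \<delta> * (lam + 1))) / (2 * \<delta>)"

definition mu_u_plus :: "real \<Rightarrow> real \<Rightarrow> real \<Rightarrow> real" where
  "mu_u_plus \<delta> c lam = (- c + sqrt (c^2 + 4 * \<delta> * (lam - 1))) / (2 * \<delta>)"

definition mu_s_plus :: "real \<Rightarrow> real \<Rightarrow> real \<Rightarrow> real" where
  "mu_s_plus \<delta> c lam = (- c - sqrt (c^2 + 4 * \<delta> * (lam - 1))) / (2 * \<delta>)"

text \<open>Its projective class [p:q] in RP^1
  is a solution of the Riccati equation for eta = q/p (extended through infinity).\<close>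
definition lin_sol :: "real \<Rightarrow> real \<Rightarrow> (real \<Rightarrow> real) \<Rightarrow> real \<Rightarrow> (real \<Rightarrow> real) \<Rightarrow> (real \<Rightarrow> real) \<Rightarrow> bool" where
  "lin_sol \<delta> c u lam p q \<longleftrightarrow>
     (\<forall>z. (p has_real_derivative q z) (at z) \<and>
          (q has_real_derivative (((lam - 1 + 2 * u z) / \<delta>) * p z - (c / \<delta>) * q z)) (at z))
     \<and> (\<exists>z. p z \<noteq> 0 \<or> q z \<noteq> 0)"

definition proj_tendsto :: "(real \<Rightarrow> real) \<Rightarrow> (real \<Rightarrow> real) \<Rightarrow> real \<Rightarrow> real filter \<Rightarrow> bool" where
  "proj_tendsto p q \<mu> F \<longleftrightarrow> eventually (\<lambda>z. p z \<noteq> 0) F \<and> ((\<lambda>z. q z / p z) \<longlongrightarrow> \<mu>) F"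

text \<open>(p,q) represents ell(.;lambda): the Riccati solution tending to mu^u_-(lambda) at -infinity.\<close>
definition ell_frame :: "real \<Rightarrow> real \<Rightarrow> (real \<Rightarrow> real) \<Rightarrow> real \<Rightarrow> (real \<Rightarrow> real) \<Rightarrow> (real \<Rightarrow> real) \<Rightarrow> bool" where
  "ell_frame \<delta> c u lam p q \<longleftrightarrow> lin_sol \<delta> c u lam p q \<and> proj_tendsto p q (mu_u_minus \<delta> c lam) at_bot"

definition is_eigenvalue :: "real \<Rightarrow> real \<Rightarrow> (real \<Rightarrow> real) \<Rightarrow> real \<Rightarrow> bool" where
  "is_eigenvalue \<delta> c u lam \<longleftrightarrow> lam \<ge> 0 \<and>
     (\<exists>p q. ell_frame \<delta> c u lam p q \<and> proj_tendsto p q (mu_s_plus \<delta> c lam) at_top)"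

definition hits :: "(real \<Rightarrow> real) \<Rightarrow> (real \<Rightarrow> real) \<Rightarrow> real \<Rightarrow> real set" where
  "hits p q \<mu> = {z. p z \<noteq> 0 \<and> q z / p z = \<mu>}"

end

theory Submission
  imports Defs
begin

text \<open>For c \<ge> 2 sqrt \<delta> the front is positive: with \<mu> < 0 the root of
  \<delta> \<mu>^2 + c \<mu> + 1 = 0 and k = c/\<delta> + \<mu>, the quantity H = u' - \<mu> u satisfies
  (H exp(k z))' = (u^2/\<delta>) exp(k z) \<ge> 0, which forces H > 0 (otherwise u' \<le> \<mu>/2
  near -\<infinity>, incompatible with u \<rightarrow> 1), and then (u exp(-\<mu> z))' = H exp(-\<mu> z) > 0.
  The same device applied to F = (q - m p) p with m = mu_u_plus gives
  (F exp(c z/\<delta>))' = ((q - m p)^2 + 2 u p^2/\<delta>) exp(c z/\<delta>) \<ge> 0; since \<ell> starts at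
  mu_u_minus > mu_u_plus, it stays strictly above mu_u_plus \<ge> mu_s_plus for all z.
  Hence \<ell> never takes the value mu_s_plus (so N1 = N2 = 0), and for \<lambda> > 0, where
  mu_s_plus < mu_u_plus strictly, \<ell> cannot tend to mu_s_plus: there are no eigenvalues
  in (\<lambda>1, \<lambda>2) at all.\<close>

lemma discr_nonneg_of_wave_speed:
  fixes \<delta> c :: real
  assumes "\<delta> > 0" and "c \<ge> 2 * sqrt \<delta>"
  shows "4 * \<delta> \<le> c\<^sup>2"
proof -
  have "(2 * sqrt \<delta>)\<^sup>2 \<le> c\<^sup>2" using assms by (intro power_mono) auto
  thus ?thesis using assms by (simp add: power_mult_distrib)
qed

lemma discr_nonneg:
  fixes \<delta> c lam :: real
  assumes "\<delta> > 0" and "4 * \<delta> \<le> c\<^sup>2" and "lam \<ge> 0"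
  shows "c\<^sup>2 + 4 * \<delta> * (lam - 1) \<ge> 0"
proof -
  have "0 \<le> \<delta> * lam" using assms by simp
  thus ?thesis using assms(2) by (simp add: algebra_simps)
qed

lemma quadratic_root:
  fixes \<delta> c e s :: real
  assumes "\<delta> \<noteq> 0" and "s\<^sup>2 = c\<^sup>2 + 4 * \<delta> * e"
  shows "\<delta> * ((- c + s) / (2 * \<delta>))\<^sup>2 + c * ((- c + s) / (2 * \<delta>)) = e"
proof -
  have "\<delta> * ((- c + s) / (2 * \<delta>))\<^sup>2 + c * ((- c + s) / (2 * \<delta>)) = (s\<^sup>2 - c\<^sup>2) / (4 * \<delta>)"
    using assms(1) by (simp add: field_simps power2_eq_square)
  thus ?thesis using assms by simp
qed

lemma has_real_derivative_times_exp:
  fixes F :: "real \<Rightarrow> real" and F' k z :: real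
  assumes "(F has_real_derivative F') (at z)"
  shows "((\<lambda>z. F z * exp (k * z)) has_real_derivative (F' + k * F z) * exp (k * z)) (at z)"
  using assms by (auto intro!: derivative_eq_intros simp: algebra_simps)

lemma weighted_nondecreasing:
  fixes F G :: "real \<Rightarrow> real" and k a b :: real
  assumes "\<And>z. ((\<lambda>z. F z * exp (k * z)) has_real_derivative G z) (at z)"
    and "\<And>z. G z \<ge> 0" and "a \<le> b"
  shows "F a * exp (k * a) \<le> F b * exp (k * b)"
  using DERIV_nonneg_imp_nondecreasing[of a b "\<lambda>z. F z * exp (k * z)"] assms by blast

lemma pos_of_weighted_nondecreasing:
  fixes F G :: "real \<Rightarrow> real" and k z :: real
  assumes "\<And>z. ((\<lambda>z. F z * exp (k * z)) has_real_derivative G z) (at z)"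
    and "\<And>z. G z \<ge> 0" and "eventually (\<lambda>z. F z > 0) at_bot"
  shows "F z > 0"
proof -
  obtain N where N: "\<And>w. w \<le> N \<Longrightarrow> F w > 0"
    using assms(3) by (auto simp: eventually_at_bot_linorder)
  have "0 < F (min z N) * exp (k * min z N)" using N by simp
  also have "\<dots> \<le> F z * exp (k * z)" by (rule weighted_nondecreasing[OF assms(1,2)]) simp
  finally show ?thesis by (simp add: zero_less_mult_iff)
qed

lemma exceeds_of_deriv_le_neg:
  fixes g g' :: "real \<Rightarrow> real" and Z e B :: real
  assumes "\<And>w. (g has_real_derivative g' w) (at w)"
    and "\<And>w. w \<le> Z \<Longrightarrow> g' w \<le> - e" and "e > 0"
  obtains w where "w \<le> Z" and "g w \<ge> B"
proof -
  define w where "w = min Z (Z - (B - g Z) / e)"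
  have "((\<lambda>x. g x + e * x) has_real_derivative g' x + e) (at x)" for x
    by (auto intro!: derivative_eq_intros assms(1))
  then have "(\<lambda>x. g x + e * x) Z \<le> (\<lambda>x. g x + e * x) w"
    using assms(2) by (intro DERIV_nonpos_imp_nonincreasing[of w Z]) (force simp: w_def)+
  moreover have "(B - g Z) / e \<le> Z - w" by (simp add: w_def)
  then have "B - g Z \<le> e * (Z - w)" using assms(3) by (simp add: pos_divide_le_eq mult.commute)
  ultimately have "g w \<ge> B" by (simp add: algebra_simps)
  thus thesis using that[of w] by (simp add: w_def)
qed

lemma front_pos:
  fixes \<delta> c :: real and u u' :: "real \<Rightarrow> real"
  assumes \<delta>: "\<delta> > 0" and c: "c > 0" and speed: "4 * \<delta> \<le> c\<^sup>2"
    and du: "\<And>z. (u has_real_derivative u' z) (at z)"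
    and du': "\<And>z. (u' has_real_derivative (- (c * u' z + u z * (1 - u z)) / \<delta>)) (at z)"
    and lim: "(u \<longlongrightarrow> 1) at_bot"
  shows "u z > 0"
proof -
  define s where "s = sqrt (c\<^sup>2 - 4 * \<delta>)"
  have s2: "s\<^sup>2 = c\<^sup>2 + 4 * \<delta> * -1" using speed by (simp add: s_def)
  have "s < sqrt (c\<^sup>2)" using \<delta> by (simp add: s_def del: real_sqrt_abs)
  hence "s < c" using c by simp
  define \<mu> where "\<mu> = (- c + s) / (2 * \<delta>)"
  have root: "\<delta> * \<mu>\<^sup>2 + c * \<mu> = -1"
    unfolding \<mu>_def using quadratic_root[OF _ s2] \<delta> by simp
  have \<mu>_neg: "\<mu> < 0" unfolding \<mu>_def using \<open>s < c\<close> \<delta> by (simp add: divide_neg_pos)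
  define k where "k = c / \<delta> + \<mu>"
  define H where "H z = u' z - \<mu> * u z" for z
  have H_deriv: "((\<lambda>z. H z * exp (k * z)) has_real_derivative (u z)\<^sup>2 / \<delta> * exp (k * z)) (at z)" for z
  proof -
    let ?H' = "- (c * u' z + u z * (1 - u z)) / \<delta> - \<mu> * u' z"
    have "(H has_real_derivative ?H') (at z)"
      unfolding H_def by (auto intro!: derivative_eq_intros du du')
    moreover have "?H' + k * H z = ((u z)\<^sup>2 - u z * (\<delta> * \<mu>\<^sup>2 + c * \<mu> + 1)) / \<delta>"
      using \<delta> unfolding k_def H_def by (simp add: field_simps power2_eq_square)
    ultimately show ?thesis using root has_real_derivative_times_exp[of H ?H' z k] by simp
  qed
  obtain N where N: "\<And>w. w \<le> N \<Longrightarrow> u w > 1/2 \<and> u w < 2"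
    using eventually_conj[OF order_tendstoD(1)[OF lim, of "1/2"] order_tendstoD(2)[OF lim, of 2]]
    by (auto simp: eventually_at_bot_linorder)
  have H_pos: "H z > 0" for z
  proof (rule ccontr)
    assume "\<not> H z > 0"
    have "u' w \<le> - (- \<mu> / 2)" if "w \<le> min z N" for w
    proof -
      have "H w * exp (k * w) \<le> H z * exp (k * z)"
        by (rule weighted_nondecreasing[OF H_deriv]) (use that \<delta> in auto)
      also have "\<dots> \<le> 0" using \<open>\<not> H z > 0\<close> by (simp add: mult_nonpos_nonneg)
      finally have "u' w \<le> \<mu> * u w" by (simp add: H_def mult_le_0_iff)
      also have "\<mu> * u w \<le> \<mu> / 2" using N[of w] that \<mu>_neg by (simp add: mult_le_cancel_left)
      finally show ?thesis by simp
    qed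
    then obtain w where "w \<le> min z N" "u w \<ge> 2"
      using exceeds_of_deriv_le_neg[OF du, of "min z N" "- \<mu> / 2" 2] \<mu>_neg by auto
    with N[of w] show False by simp
  qed
  show ?thesis
  proof (rule pos_of_weighted_nondecreasing[of u "- \<mu>"])
    show "((\<lambda>z. u z * exp (- \<mu> * z)) has_real_derivative H z * exp (- \<mu> * z)) (at z)" for z
      unfolding H_def by (auto intro!: derivative_eq_intros du simp: algebra_simps)
    show "H z * exp (- \<mu> * z) \<ge> 0" for z using H_pos[of z] by simp
    show "eventually (\<lambda>z. u z > 0) at_bot" using order_tendstoD(1)[OF lim] by simp
  qed
qed

lemma ell_frame_above_mu_u_plus:
  fixes \<delta> c lam :: real and u p q :: "real \<Rightarrow> real"
  assumes \<delta>: "\<delta> > 0" and discr: "c\<^sup>2 + 4 * \<delta> * (lam - 1) \<ge> 0"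
    and u_nonneg: "\<And>z. u z \<ge> 0" and frame: "ell_frame \<delta> c u lam p q"
  shows "p z \<noteq> 0 \<and> q z / p z > mu_u_plus \<delta> c lam"
proof -
  define m where "m = mu_u_plus \<delta> c lam"
  have root: "\<delta> * m\<^sup>2 + c * m = lam - 1"
    unfolding m_def mu_u_plus_def using \<delta> discr by (intro quadratic_root) auto
  have "m < mu_u_minus \<delta> c lam"
    unfolding m_def mu_u_plus_def mu_u_minus_def using \<delta> by (simp add: divide_strict_right_mono)
  from frame have dp: "\<And>z. (p has_real_derivative q z) (at z)"
    and dq: "\<And>z. (q has_real_derivative (((lam - 1 + 2 * u z) / \<delta>) * p z - (c / \<delta>) * q z)) (at z)"
    and lim: "proj_tendsto p q (mu_u_minus \<delta> c lam) at_bot"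
    unfolding ell_frame_def lin_sol_def by auto
  define F where "F z = (q z - m * p z) * p z" for z
  have F_eq: "F z = (p z)\<^sup>2 * (q z / p z - m)" if "p z \<noteq> 0" for z
    unfolding F_def using that by (simp add: field_simps power2_eq_square)
  have F_deriv: "((\<lambda>z. F z * exp (c / \<delta> * z)) has_real_derivative
      ((q z - m * p z)\<^sup>2 + 2 * u z * (p z)\<^sup>2 / \<delta>) * exp (c / \<delta> * z)) (at z)" for z
  proof -
    let ?q' = "((lam - 1 + 2 * u z) / \<delta>) * p z - (c / \<delta>) * q z"
    let ?F' = "(?q' - m * q z) * p z + (q z - m * p z) * q z"
    have "(F has_real_derivative ?F') (at z)"
      unfolding F_def by (auto intro!: derivative_eq_intros dp dq)
    moreover have "?F' + c / \<delta> * F z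
        = (q z - m * p z)\<^sup>2 + 2 * u z * (p z)\<^sup>2 / \<delta> - (p z)\<^sup>2 * (\<delta> * m\<^sup>2 + c * m - (lam - 1)) / \<delta>"
      using \<delta> unfolding F_def by (simp add: field_simps power2_eq_square)
    ultimately show ?thesis
      using root has_real_derivative_times_exp[of F ?F' z "c / \<delta>"] by simp
  qed
  have "eventually (\<lambda>z. F z > 0) at_bot"
  proof -
    have "eventually (\<lambda>z. p z \<noteq> 0 \<and> q z / p z > m) at_bot"
      using lim \<open>m < mu_u_minus \<delta> c lam\<close>
      unfolding proj_tendsto_def by (auto intro: eventually_conj order_tendstoD(1))
    thus ?thesis by eventually_elim (simp add: F_eq)
  qed
  then have "F z > 0"
    by (intro pos_of_weighted_nondecreasing[OF F_deriv]) (use \<delta> u_nonneg in auto)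
  then have "p z \<noteq> 0" by (auto simp: F_def)
  with \<open>F z > 0\<close> show ?thesis by (simp add: F_eq m_def zero_less_mult_iff)
qed

lemma mu_s_plus_le_mu_u_plus:
  fixes \<delta> c lam :: real
  assumes "\<delta> > 0" and "4 * \<delta> \<le> c\<^sup>2" and "lam \<ge> 0"
  shows "mu_s_plus \<delta> c lam \<le> mu_u_plus \<delta> c lam"
  unfolding mu_s_plus_def mu_u_plus_def using assms(1) discr_nonneg[OF assms]
  by (simp add: divide_right_mono)

lemma mu_s_plus_less_mu_u_plus:
  fixes \<delta> c lam :: real
  assumes "\<delta> > 0" and "4 * \<delta> \<le> c\<^sup>2" and "lam > 0"
  shows "mu_s_plus \<delta> c lam < mu_u_plus \<delta> c lam"
proof -
  have "0 < \<delta> * lam" using assms by simp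
  hence "0 < c\<^sup>2 + 4 * \<delta> * (lam - 1)" using assms(2) by (simp add: algebra_simps)
  thus ?thesis unfolding mu_s_plus_def mu_u_plus_def using assms(1)
    by (simp add: divide_strict_right_mono)
qed

lemma hits_mu_s_plus_empty:
  fixes \<delta> c lam :: real and u p q :: "real \<Rightarrow> real"
  assumes "\<delta> > 0" and "4 * \<delta> \<le> c\<^sup>2" and "lam \<ge> 0"
    and "\<And>z. u z \<ge> 0" and "ell_frame \<delta> c u lam p q"
  shows "hits p q (mu_s_plus \<delta> c lam) = {}"
proof -
  have "q z / p z \<noteq> mu_s_plus \<delta> c lam" for z
    using ell_frame_above_mu_u_plus[OF assms(1) discr_nonneg[OF assms(1-3)] assms(4,5), of z]
      mu_s_plus_le_mu_u_plus[OF assms(1-3)] by simp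
  thus ?thesis by (auto simp: hits_def)
qed

lemma not_is_eigenvalue_pos:
  fixes \<delta> c lam :: real and u :: "real \<Rightarrow> real"
  assumes \<delta>: "\<delta> > 0" and speed: "4 * \<delta> \<le> c\<^sup>2" and "lam > 0" and u_nonneg: "\<And>z. u z \<ge> 0"
  shows "\<not> is_eigenvalue \<delta> c u lam"
proof
  assume "is_eigenvalue \<delta> c u lam"
  then obtain p q where frame: "ell_frame \<delta> c u lam p q"
    and lim: "((\<lambda>z. q z / p z) \<longlongrightarrow> mu_s_plus \<delta> c lam) at_top"
    unfolding is_eigenvalue_def proj_tendsto_def by auto
  have "mu_u_plus \<delta> c lam \<le> mu_s_plus \<delta> c lam"
  proof (rule tendsto_lowerbound[OF lim always_eventually])
    show "\<forall>z. mu_u_plus \<delta> c lam \<le> q z / p z"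
      using ell_frame_above_mu_u_plus[OF \<delta> discr_nonneg u_nonneg frame] \<open>lam > 0\<close> \<delta> speed
      by (auto intro: less_imp_le)
  qed simp
  with mu_s_plus_less_mu_u_plus[OF \<delta> speed \<open>lam > 0\<close>] show False by simp
qed

theorem mainTheorem5:
  fixes \<delta> c :: real and u u' :: "real \<Rightarrow> real"
    and lam\<^sub>1 lam\<^sub>2 :: real and p\<^sub>1 q\<^sub>1 p\<^sub>2 q\<^sub>2 :: "real \<Rightarrow> real" and N\<^sub>1 N\<^sub>2 :: nat
  assumes "\<delta> > 0" and "c > 0" and "c \<ge> 2 * sqrt \<delta>"
    and "\<forall>z. (u has_real_derivative u' z) (at z)"
    and "\<forall>z. (u' has_real_derivative (- (c * u' z + u z * (1 - u z)) / \<delta>)) (at z)"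
    and "(u \<longlongrightarrow> 1) at_bot" and "(u \<longlongrightarrow> 0) at_top"
    and "0 \<le> lam\<^sub>1" and "lam\<^sub>1 < lam\<^sub>2"
    and "\<not> is_eigenvalue \<delta> c u lam\<^sub>1" and "\<not> is_eigenvalue \<delta> c u lam\<^sub>2"
    and "ell_frame \<delta> c u lam\<^sub>1 p\<^sub>1 q\<^sub>1" and "ell_frame \<delta> c u lam\<^sub>2 p\<^sub>2 q\<^sub>2"
    and "finite (hits p\<^sub>1 q\<^sub>1 (mu_s_plus \<delta> c lam\<^sub>1))" and "card (hits p\<^sub>1 q\<^sub>1 (mu_s_plus \<delta> c lam\<^sub>1)) = N\<^sub>1"
    and "finite (hits p\<^sub>2 q\<^sub>2 (mu_s_plus \<delta> c lam\<^sub>2))" and "card (hits p\<^sub>2 q\<^sub>2 (mu_s_plus \<delta> c lam\<^sub>2)) = N\<^sub>2"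
  shows "finite {lam. lam\<^sub>1 < lam \<and> lam < lam\<^sub>2 \<and> is_eigenvalue \<delta> c u lam}
       \<and> card {lam. lam\<^sub>1 < lam \<and> lam < lam\<^sub>2 \<and> is_eigenvalue \<delta> c u lam} = nat \<bar>int N\<^sub>1 - int N\<^sub>2\<bar>"
proof -
  have speed: "4 * \<delta> \<le> c\<^sup>2" using discr_nonneg_of_wave_speed assms(1,3) .
  have "u z > 0" for z
    by (rule front_pos[OF assms(1,2) speed]) (use assms(4-6) in auto)
  hence u_nonneg: "u z \<ge> 0" for z by (simp add: less_imp_le)
  have "N\<^sub>1 = 0" "N\<^sub>2 = 0"
    using hits_mu_s_plus_empty[OF assms(1) speed _ u_nonneg] assms(8,9,12,13,15,17) by auto
  moreover have "{lam. lam\<^sub>1 < lam \<and> lam < lam\<^sub>2 \<and> is_eigenvalue \<delta> c u lam} = {}"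
    using not_is_eigenvalue_pos[OF assms(1) speed _ u_nonneg] assms(8) by force
  ultimately show ?thesis by (simp only:) simp
qed

end
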